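(* A reaction network $\mathcal R$ is essential if and only if for all $x,x'\in\mathbb{N}_0^n$: if $x$ leads to $x'$ via $\mathcal R$, then $x'$ leads to $x$ via $\mathcal R$.
   Context: A reaction network (RN) is a (possibly infinite) subset $\mathcal R\subseteq\mathbb{N}_0^n\times\mathbb{N}_0^n$ containing no element $(y,y')$ with $y=y'$; elements $(y,y')$ are reactions $y\to y'$. For $r_1=(y_1,y_1'),\ r_2=(y_2,y_2')$ define $r_1\oplus r_2=(y_1+0\vee(y_2-y_1'),\ y_2'+0\vee(y_1'-y_2))$ ($\vee$ componentwise maximum); it is associative. For $A\subseteq\mathbb{N}_0^n\times\mathbb{N}_0^n$, $\mathrm{cl}(A)$ is the set of all finite $\oplus$-sums of elements of $A$, including the empty sum $(0,0)$. For $r=(y,y')$, $r^{-1}=(y',y)$. A set $A$ is reversible if $r\in A$ implies $r^{-1}\in A$, and $A$ is essential if $\mathrm{cl}(A)$ is reversible. An ordered sequence of reactions $y_1\to y_1',\dots,y_m\to y_m'$ is active on $x\in\mathbb{N}_0^n$ if $x+\sum_{i=1}^{k-1}(y_i'-y_i)\ge y_k$ (componentwise) for all $k$. A state $x$ leads to $x'$ via $\mathcal R$ if there is an ordered sequence of $m\ge0$ reactions of $\mathcal R$ (repetitions allowed) active on $x$ with $x'=x+\sum_{i=1}^m(y_i'-y_i)$. *)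

theory Defs
  imports "HOL-Analysis.Analysis"
begin

text \<open>States are elements of N_0^n, rendered as nat ^ 'n (n = CARD('n)).
  A reaction is a pair (y, y').\<close>

type_synonym 'n reaction = "(nat ^ 'n) \<times> (nat ^ 'n)"

definition reaction_network :: "('n::finite) reaction set \<Rightarrow> bool" where
  "reaction_network R \<longleftrightarrow> (\<forall>r\<in>R. fst r \<noteq> snd r)"

text \<open>r1 (+) r2 = (y1 + 0 v (y2 - y1'), y2' + 0 v (y1' - y2)); on nat, 0 v (a - b) is truncated subtraction.\<close>
definition rsum :: "('n::finite) reaction \<Rightarrow> 'n reaction \<Rightarrow> 'n reaction" where
  "rsum r1 r2 = (case r1 of (y1, y1') \<Rightarrow> case r2 of (y2, y2') \<Rightarrow>
     ((\<chi> i. y1 $ i + nat (max 0 (int (y2 $ i) - int (y1' $ i)))),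
      (\<chi> i. y2' $ i + nat (max 0 (int (y1' $ i) - int (y2 $ i))))))"

text \<open>cl(A): all finite (+)-sums of elements of A (left-fold of a list; the operation is associative),
  including the empty sum (0,0).\<close>
definition cl :: "('n::finite) reaction set \<Rightarrow> 'n reaction set" where
  "cl A = {foldl rsum (0, 0) rs | rs. set rs \<subseteq> A}"

definition rinv :: "('n::finite) reaction \<Rightarrow> 'n reaction" where
  "rinv r = (snd r, fst r)"

definition reversible :: "('n::finite) reaction set \<Rightarrow> bool" where
  "reversible A \<longleftrightarrow> (\<forall>r\<in>A. rinv r \<in> A)"

definition essential :: "('n::finite) reaction set \<Rightarrow> bool" where
  "essential A \<longleftrightarrow> reversible (cl A)"

definition net_change :: "('n::finite) reaction list \<Rightarrow> int ^ 'n" where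
  "net_change rs = (\<chi> i. (\<Sum>r\<leftarrow>rs. int (snd r $ i) - int (fst r $ i)))"

definition active_on :: "('n::finite) reaction list \<Rightarrow> nat ^ 'n \<Rightarrow> bool" where
  "active_on rs x \<longleftrightarrow> (\<forall>k < length rs. \<forall>i.
      int (x $ i) + net_change (take k rs) $ i \<ge> int (fst (rs ! k) $ i))"

definition leads_to :: "('n::finite) reaction set \<Rightarrow> nat ^ 'n \<Rightarrow> nat ^ 'n \<Rightarrow> bool" where
  "leads_to R x x' \<longleftrightarrow> (\<exists>rs. set rs \<subseteq> R \<and> active_on rs x \<and>
      (\<forall>i. int (x' $ i) = int (x $ i) + net_change rs $ i))"

end

theory Submission
  imports Defs
begin

text \<open>Summing a reaction sequence with \<open>\<oplus>\<close> yields a single reaction with the same net change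
  whose source is the least state on which the sequence is active. Hence x leads to x' iff some
  reaction (y, y') of cl R satisfies y \<le> x and x' + y = x + y'. If cl R is reversible, the
  reverse reaction then carries x' back to x. Conversely, a reaction (y, y') of cl R carries y to y';
  a reaction (z, z') of cl R carrying y' back to y gives
  (z, z') \<oplus> (y, y') \<oplus> (z, z') = (y', y) \<in> cl R.\<close>

lemma fst_rsum_nth: "fst (rsum r s) $ i = fst r $ i + (fst s $ i - snd r $ i)"
  by (cases r; cases s) (simp add: rsum_def max_def nat_diff_distrib')

lemma snd_rsum_nth: "snd (rsum r s) $ i = snd s $ i + (snd r $ i - fst s $ i)"
  by (cases r; cases s) (simp add: rsum_def max_def nat_diff_distrib'; linarith)

lemma reaction_eq_iff:
  "(r::('n::finite) reaction) = s \<longleftrightarrow> (\<forall>i. fst r $ i = fst s $ i \<and> snd r $ i = snd s $ i)"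
  by (cases r; cases s) (auto simp: vec_eq_iff)

lemma rsum_assoc: "rsum (rsum r s) t = rsum r (rsum s t)"
  unfolding reaction_eq_iff fst_rsum_nth snd_rsum_nth by auto

lemma rsum_zero_left [simp]: "rsum (0, 0) r = r"
  unfolding reaction_eq_iff fst_rsum_nth snd_rsum_nth by auto

lemma rsum_zero_right [simp]: "rsum r (0, 0) = r"
  unfolding reaction_eq_iff fst_rsum_nth snd_rsum_nth by auto

definition rsum_list :: "('n::finite) reaction list \<Rightarrow> 'n reaction" where
  "rsum_list rs = foldl rsum (0, 0) rs"

lemma foldl_rsum: "foldl rsum r rs = rsum r (rsum_list rs)"
proof (induction rs arbitrary: r)
  case Nil
  then show ?case by (simp add: rsum_list_def)
next
  case (Cons s rs)
  have "rsum_list (s # rs) = rsum s (rsum_list rs)"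
    unfolding rsum_list_def by (simp only: foldl_Cons rsum_zero_left Cons.IH)
  then show ?case by (simp only: foldl_Cons Cons.IH rsum_assoc)
qed

lemma rsum_list_append: "rsum_list (rs @ ss) = rsum (rsum_list rs) (rsum_list ss)"
  unfolding rsum_list_def by (simp only: foldl_append foldl_rsum rsum_zero_left)

lemma rsum_list_snoc: "rsum_list (rs @ [r]) = rsum (rsum_list rs) r"
  by (simp add: rsum_list_append) (simp add: rsum_list_def)

lemma cl_eq_image: "cl A = rsum_list ` {rs. set rs \<subseteq> A}"
  by (auto simp: cl_def rsum_list_def)

lemma rsum_in_cl: "r \<in> cl A \<Longrightarrow> s \<in> cl A \<Longrightarrow> rsum r s \<in> cl A"
  unfolding cl_eq_image
  by (clarsimp simp flip: rsum_list_append)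

lemma net_change_rsum_list:
  "net_change rs $ i = int (snd (rsum_list rs) $ i) - int (fst (rsum_list rs) $ i)"
proof (induction rs rule: rev_induct)
  case Nil
  then show ?case by (simp add: rsum_list_def net_change_def)
next
  case (snoc r rs)
  then show ?case
    unfolding rsum_list_snoc fst_rsum_nth snd_rsum_nth by (simp add: net_change_def)
qed

lemma active_on_iff_source_le: "active_on rs x \<longleftrightarrow> fst (rsum_list rs) \<le> x"
proof (induction rs rule: rev_induct)
  case Nil
  then show ?case by (simp add: rsum_list_def active_on_def less_eq_vec_def)
next
  case (snoc r rs)
  have step: "fst (rsum_list rs) $ i \<le> x $ i \<and> int (fst r $ i) \<le> int (x $ i) + net_change rs $ i
      \<longleftrightarrow> fst (rsum_list (rs @ [r])) $ i \<le> x $ i" for i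
    unfolding rsum_list_snoc fst_rsum_nth net_change_rsum_list by linarith
  have "active_on (rs @ [r]) x \<longleftrightarrow>
      active_on rs x \<and> (\<forall>i. int (fst r $ i) \<le> int (x $ i) + net_change rs $ i)"
    unfolding active_on_def by (auto simp: less_Suc_eq nth_append)
  also have "\<dots> \<longleftrightarrow> fst (rsum_list (rs @ [r])) \<le> x"
    using step by (simp add: snoc.IH less_eq_vec_def all_conj_distrib[symmetric])
  finally show ?case .
qed

lemma leads_to_iff_cl:
  "leads_to R x x' \<longleftrightarrow> (\<exists>(y, y') \<in> cl R. y \<le> x \<and> x' + y = x + y')"
proof -
  have "int a = int b + (int c - int d) \<longleftrightarrow> a + d = b + c" for a b c d :: nat
    by linarith
  then have net_change_iff: "(\<forall>i. int (x' $ i) = int (x $ i) + net_change rs $ i) \<longleftrightarrow>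
      x' + fst (rsum_list rs) = x + snd (rsum_list rs)" for rs
    unfolding net_change_rsum_list vec_eq_iff by simp
  have "leads_to R x x' \<longleftrightarrow> (\<exists>rs. set rs \<subseteq> R \<and> fst (rsum_list rs) \<le> x \<and>
      x' + fst (rsum_list rs) = x + snd (rsum_list rs))"
    unfolding leads_to_def active_on_iff_source_le net_change_iff ..
  also have "\<dots> \<longleftrightarrow> (\<exists>r \<in> cl R. fst r \<le> x \<and> x' + fst r = x + snd r)"
    unfolding cl_eq_image by simp
  finally show ?thesis
    by (simp add: case_prod_beta)
qed

lemma rsum_return_trip:
  assumes "z \<le> y'" and "y + z = y' + z'"
  shows "rsum (rsum (z, z') (y, y')) (z, z') = (y', y)"
  unfolding reaction_eq_iff fst_rsum_nth snd_rsum_nth fst_conv snd_conv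
proof (intro allI)
  fix i
  have "z $ i \<le> y' $ i" and "y $ i + z $ i = y' $ i + z' $ i"
    using assms by (auto simp: less_eq_vec_def vec_eq_iff)
  then have "y $ i - z' $ i = y' $ i - z $ i" and "z' $ i - y $ i = 0" and "z $ i \<le> y' $ i"
    by arith+
  then show "z $ i + (y $ i - z' $ i) + (z $ i - (y' $ i + (z' $ i - y $ i))) = y' $ i \<and>
      z' $ i + (y' $ i + (z' $ i - y $ i) - z $ i) = y $ i"
    using \<open>y $ i + z $ i = y' $ i + z' $ i\<close> by auto
qed

lemma leads_to_back_if_reversible_cl:
  assumes "reversible (cl R)" and "leads_to R x x'"
  shows "leads_to R x' x"
proof -
  obtain y y' where yy: "(y, y') \<in> cl R" "y \<le> x" "x' + y = x + y'"
    using assms(2) unfolding leads_to_iff_cl by blast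
  have "y' \<le> x'"
    unfolding less_eq_vec_def
  proof
    fix i
    have "x' $ i + y $ i = x $ i + y' $ i"
      using yy(3) by (metis vector_add_component)
    moreover have "y $ i \<le> x $ i"
      using yy(2) by (simp add: less_eq_vec_def)
    ultimately show "y' $ i \<le> x' $ i" by linarith
  qed
  moreover have "(y', y) \<in> cl R"
    using assms(1) yy(1) unfolding reversible_def rinv_def by force
  ultimately show ?thesis
    unfolding leads_to_iff_cl using yy(3) by (intro bexI[of _ "(y', y)"]) (auto simp: add.commute)
qed

lemma reversible_cl_if_leads_back:
  assumes leads_back: "\<And>x x'. leads_to R x x' \<Longrightarrow> leads_to R x' x"
  shows "reversible (cl R)"
  unfolding reversible_def
proof
  fix r
  assume r: "r \<in> cl R"
  obtain y y' where yy: "r = (y, y')" by fastforce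
  have "leads_to R y y'"
    unfolding leads_to_iff_cl using r yy by (intro bexI[of _ r]) (auto simp: add.commute)
  then obtain z z' where returns: "(z, z') \<in> cl R" "z \<le> y'" "y + z = y' + z'"
    using leads_back unfolding leads_to_iff_cl by blast
  have "rsum (rsum (z, z') r) (z, z') \<in> cl R"
    by (intro rsum_in_cl r returns(1))
  moreover have "rsum (rsum (z, z') r) (z, z') = rinv r"
    unfolding yy rinv_def using rsum_return_trip[OF returns(2,3)] by simp
  ultimately show "rinv r \<in> cl R" by simp
qed

theorem proposition3p6:
  fixes R :: "('n::finite) reaction set"
  assumes "reaction_network R"
  shows "essential R \<longleftrightarrow> (\<forall>x x'. leads_to R x x' \<longrightarrow> leads_to R x' x)"
  unfolding essential_def
  using leads_to_back_if_reversible_cl reversible_cl_if_leads_back by blast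

end
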